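(* Assume (A4) and (A5) of the context. Then for every $\beta>1/2$, $$\sup_{y\in\mathbb{R}}\big|\widehat f_n(y)-\mathbb{E}(\widehat f_n(y))\big|=O\big((\log n)^\beta\,2^{j_n}n^{-1/2}\big)\quad\text{almost surely.}$$
   Context: $Y$ is a real random variable with density $f\in L^2(\mathbb{R})$, and $Y_1,\dots,Y_n$ are i.i.d. copies of $Y$. $\varphi$ is a father wavelet and $\psi$ the associated mother wavelet, so that $\{\varphi_k=\varphi(\cdot-k),\ \psi_{\ell k}=2^{\ell/2}\psi(2^\ell\cdot-k):k\in\mathbb{Z},\ell\in\mathbb{N}\}$ is an orthonormal basis of $L^2(\mathbb{R})$, and $K(x,y)=\sum_{k\in\mathbb{Z}}\varphi(x-k)\varphi(y-k)$. $(j_n)$ is an increasing integer sequence tending to $+\infty$, and $\widehat f_n(y)=\sum_k\big(\frac1n\sum_{i=1}^n\varphi_k(Y_i)\big)\varphi_k(y)+\sum_{\ell=0}^{j_n}\sum_k\big(\frac1n\sum_{i=1}^n\psi_{\ell k}(Y_i)\big)\psi_{\ell k}(y)$. (A4): $\varphi$ and $\psi$ are bounded and compactly supported. (A5): $|K(x,y)|\le\Phi(x-y)$ where $\Phi:\mathbb{R}\to\mathbb{R}_+$ is bounded, compactly supported and symmetric with $\int u^2\Phi^2(u)du<\infty$ and $\int|u|^k\Phi(u)du<\infty$ for $k\in\{0,1,4\}$; and $\int K(x,y)(y-x)^kdy=0$ for all $x\in\mathbb{R}$, $k\in\{1,2,3\}$. *)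

theory Defs
  imports "HOL-Probability.Probability"
begin

definition wphi :: "(real \<Rightarrow> real) \<Rightarrow> int \<Rightarrow> real \<Rightarrow> real" where
  "wphi \<phi> k x = \<phi> (x - real_of_int k)"

definition wpsi :: "(real \<Rightarrow> real) \<Rightarrow> nat \<Rightarrow> int \<Rightarrow> real \<Rightarrow> real" where
  "wpsi \<psi> l k x = 2 powr (real l / 2) * \<psi> (2 ^ l * x - real_of_int k)"

definition wfam :: "(real \<Rightarrow> real) \<Rightarrow> (real \<Rightarrow> real) \<Rightarrow> nat option \<times> int \<Rightarrow> real \<Rightarrow> real" where
  "wfam \<phi> \<psi> a = (case a of (None, k) \<Rightarrow> wphi \<phi> k | (Some l, k) \<Rightarrow> wpsi \<psi> l k)"

definition L2_orthonormal_basis :: "('i \<Rightarrow> real \<Rightarrow> real) \<Rightarrow> bool" where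
  "L2_orthonormal_basis e \<longleftrightarrow>
     (\<forall>a. e a \<in> borel_measurable borel \<and> integrable lborel (\<lambda>x. (e a x)\<^sup>2)) \<and>
     (\<forall>a b. integrable lborel (\<lambda>x. e a x * e b x) \<and>
            (LINT x|lborel. e a x * e b x) = (if a = b then 1 else 0)) \<and>
     (\<forall>g. g \<in> borel_measurable borel \<and> integrable lborel (\<lambda>x. (g x)\<^sup>2) \<and>
          (\<forall>a. (LINT x|lborel. g x * e a x) = 0) \<longrightarrow> (AE x in lborel. g x = 0))"

definition wkernel :: "(real \<Rightarrow> real) \<Rightarrow> real \<Rightarrow> real \<Rightarrow> real" where
  "wkernel \<phi> x y = (\<Sum>\<^sub>\<infinity>k::int. \<phi> (x - real_of_int k) * \<phi> (y - real_of_int k))"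

definition wavelet_est ::
  "(real \<Rightarrow> real) \<Rightarrow> (real \<Rightarrow> real) \<Rightarrow> int \<Rightarrow> nat \<Rightarrow> (nat \<Rightarrow> real) \<Rightarrow> real \<Rightarrow> real" where
  "wavelet_est \<phi> \<psi> J n Ys y =
     (\<Sum>\<^sub>\<infinity>k::int. (1 / real n * (\<Sum>i\<in>{1..n}. wphi \<phi> k (Ys i))) * wphi \<phi> k y) +
     (\<Sum>l\<in>{l::nat. int l \<le> J}. \<Sum>\<^sub>\<infinity>k::int.
        (1 / real n * (\<Sum>i\<in>{1..n}. wpsi \<psi> l k (Ys i))) * wpsi \<psi> l k y)"

end

theory Submission
  imports Defs
begin

(*
  For a fixed resolution N, the centred estimator is a sum over the father level and the levels
  l <= N of at most 2R+1 terms (1/n) (S_n g - n E g(Y)) g(y), where g runs through the translates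
  2^(l/2) psi(2^l x - k) (resp. phi(x - k)) and S_n g = sum_i g(Y_i).  So it suffices to bound the
  centred sums of all translates at all levels simultaneously, at level l by a threshold of order
  2^(l/2) (1 + N - l) s sqrt n with s = (ln n)^beta / sqrt n.

  For one level there are infinitely many translates.  The heavy ones, whose support has
  probability at least 1/K, number at most (2R+1) K, and Hoeffding's inequality with a union bound
  controls them.  The support of a light translate lies in one of the K+1 blocks formed by three
  consecutive K-quantile cells of the (atomless) law of Y; its centred sum is then dominated by
  the number of sample points in that block, and one further Hoeffding bound over the K+1 blocks
  keeps all these counts below n (3/K + s/2).  With K of order sqrt n all bad events together have
  probability O(n^-2), and the Borel-Cantelli lemma gives the almost sure rate.

  Only (A4), the measurability of phi and psi and the existence of a density of Y are used.
*)

lemma sum_pow2_weighted_le: "(\<Sum>l\<le>N. (2::real) ^ l * (1 + real (N - l))) \<le> 4 * 2 ^ N"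
proof -
  have "(\<Sum>l\<le>N. (2::real) ^ l * (1 + real (N - l))) + real N + 3 = 2 ^ (N + 2)"
  proof (induction N)
    case (Suc N)
    have "(\<Sum>l\<le>N. (2::real) ^ l * (1 + real (Suc N - l)))
        = (\<Sum>l\<le>N. (2::real) ^ l * (1 + real (N - l))) + (\<Sum>l\<le>N. 2 ^ l)"
      by (simp add: sum.distrib[symmetric] Suc_diff_le algebra_simps)
    also have "(\<Sum>l\<le>N. (2::real) ^ l) = 2 ^ Suc N - 1"
      by (induction N) auto
    finally show ?case using Suc.IH by simp
  qed simp
  then show ?thesis by simp
qed

lemma sum_half_powers_le: "(\<Sum>l\<le>N. (1/2::real) ^ (N - l)) \<le> 2"
proof -
  have "(\<Sum>l\<le>N. (1/2::real) ^ (N - l)) = (\<Sum>i\<le>N. (1/2) ^ i)"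
    by (rule sum.reindex_bij_witness[of _ "\<lambda>i. N - i" "\<lambda>l. N - l"]) auto
  also have "\<dots> = 2 - 2 * (1/2) ^ Suc N"
    by (induction N) (auto simp: atMost_Suc)
  also have "\<dots> \<le> 2"
    by simp
  finally show ?thesis .
qed

lemma exp_minus_le_half_power: "exp (- real m) \<le> (1/2::real) ^ m"
proof -
  have "exp (-1::real) \<le> 1/2"
    using exp_ge_add_one_self[of 1] by (simp add: exp_minus field_simps)
  then have "exp (-1::real) ^ m \<le> (1/2) ^ m"
    by (intro power_mono) auto
  then show ?thesis
    by (simp add: exp_of_nat_mult[symmetric])
qed

lemma exp_quadratic_tail_le:
  assumes "2 \<le> L"
  shows "exp (- L * (1 + real m)\<^sup>2 / 2) \<le> exp (- L / 2) * (1/2) ^ m"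
proof -
  have "L * (1 + real m) \<le> L * (1 + real m)\<^sup>2" "2 * real m \<le> L * real m"
    using assms by (auto intro!: mult_left_mono mult_right_mono simp: power2_eq_square)
  then have "exp (- L * (1 + real m)\<^sup>2 / 2) \<le> exp (- L / 2 - real m)"
    by (simp add: algebra_simps)
  also have "\<dots> \<le> exp (- L / 2) * (1/2) ^ m"
    unfolding diff_conv_add_uminus exp_add by (intro mult_left_mono exp_minus_le_half_power) auto
  finally show ?thesis .
qed

lemma eventually_ln_powr_ge:
  assumes "1 < p"
  shows "eventually (\<lambda>n::nat. 1 \<le> ln (real n) \<and> 6 * ln (real n) \<le> ln (real n) powr p) sequentially"
proof -
  have ln_lim: "filterlim (\<lambda>n::nat. ln (real n)) at_top sequentially"
    by (rule filterlim_compose[OF ln_at_top filterlim_real_sequentially])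
  have "((\<lambda>n::nat. ln (real n) powr (1 - p)) \<longlongrightarrow> 0) sequentially"
    using assms by (intro tendsto_neg_powr ln_lim) auto
  then have "eventually (\<lambda>n::nat. ln (real n) powr (1 - p) < 1 / 6) sequentially"
    by (rule order_tendstoD) simp
  moreover have "eventually (\<lambda>n::nat. 1 \<le> ln (real n)) sequentially"
    using ln_lim by (simp add: filterlim_at_top)
  ultimately show ?thesis
  proof eventually_elim
    case (elim n)
    then have "ln (real n) = ln (real n) powr (1 - p) * ln (real n) powr p"
      by (simp add: powr_add[symmetric])
    also have "\<dots> \<le> 1 / 6 * ln (real n) powr p"
      using elim by (intro mult_right_mono) auto
    finally show ?case
      using elim by simp
  qed
qed

lemma infsum_eq_sum_vanishing_outside:
  fixes G :: "'i \<Rightarrow> real"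
  assumes "finite W" "\<And>k. k \<notin> W \<Longrightarrow> G k = 0"
  shows "(\<Sum>\<^sub>\<infinity>k. G k) = (\<Sum>k\<in>W. G k)"
proof -
  have "(\<Sum>\<^sub>\<infinity>k. G k) = (\<Sum>\<^sub>\<infinity>k\<in>W. G k)"
    by (rule infsum_cong_neutral) (use assms(2) in auto)
  then show ?thesis
    using assms(1) by simp
qed

lemma (in finite_measure) abs_integral_le_of_support:
  assumes "integrable M g" and bounded: "\<And>x. \<bar>g x\<bar> \<le> A"
    and supp: "\<And>x. g x \<noteq> 0 \<Longrightarrow> x \<in> S" and "S \<in> sets M"
  shows "\<bar>\<integral>x. g x \<partial>M\<bar> \<le> A * measure M S"
proof -
  have "\<bar>g x\<bar> \<le> A * indicator S x" for x
    using supp[of x] bounded[of x] by (cases "g x = 0") (auto simp: indicator_def)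
  then have "\<bar>\<integral>x. g x \<partial>M\<bar> \<le> (\<integral>x. A * indicator S x \<partial>M)"
    using assms by (intro integral_abs_bound[THEN order_trans] integral_mono)
      (auto simp: integrable_indicator_iff less_top[symmetric])
  then show ?thesis
    using \<open>S \<in> sets M\<close> by simp
qed

section \<open>Quantile blocks of an atomless distribution\<close>

definition quantile_block :: "real measure \<Rightarrow> nat \<Rightarrow> nat \<Rightarrow> real set" where
  "quantile_block Q K r =
     {x. (real r - 1) / real K < cdf Q x \<and> cdf Q x < (real r + 2) / real K}"

context real_distribution
begin

lemma borel_measurable_cdf [measurable]: "cdf M \<in> borel_measurable borel"
  by (rule borel_measurable_mono) (auto simp: mono_def cdf_nondecreasing)

lemma cdf_attains_value:
  assumes atomless: "\<And>x. measure M {x} = 0" and "0 < c" "c < 1"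
  obtains t where "cdf M t = c"
proof -
  obtain a where a: "cdf M a < c"
    using order_tendstoD(2)[OF cdf_lim_at_bot \<open>0 < c\<close>] by (auto simp: eventually_at_bot_linorder)
  obtain b where b: "c < cdf M b"
    using order_tendstoD(1)[OF cdf_lim_at_top_prob \<open>c < 1\<close>] by (auto simp: eventually_at_top_linorder)
  have "a \<le> b"
    using a b cdf_nondecreasing[of b a] by linarith
  moreover have "continuous_on {a..b} (cdf M)"
    using atomless isCont_cdf by (intro continuous_at_imp_continuous_on) auto
  ultimately show ?thesis
    using IVT'[of "cdf M" a c b] a b that by auto
qed

lemma measure_cdf_less_le:
  assumes atomless: "\<And>x. measure M {x} = 0" and "0 \<le> b"
  shows "measure M {x. cdf M x < b} \<le> b"
proof (cases "0 < b \<and> b < 1")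
  case True
  then obtain t where t: "cdf M t = b"
    using cdf_attains_value[OF atomless] by blast
  have "{x. cdf M x < b} \<subseteq> {..t}"
  proof
    fix x assume "x \<in> {x. cdf M x < b}"
    then show "x \<in> {..t}"
      using cdf_nondecreasing[of t x] t by (cases "x \<le> t") auto
  qed
  then have "measure M {x. cdf M x < b} \<le> measure M {..t}"
    by (intro finite_measure_mono) auto
  then show ?thesis
    using t by (simp add: cdf_def2)
next
  case False
  then consider "b = 0" | "1 \<le> b"
    using \<open>0 \<le> b\<close> by linarith
  then show ?thesis
  proof cases
    case 1
    then have "{x. cdf M x < b} = {}"
      using cdf_nonneg by (auto simp: not_less)
    then show ?thesis
      using 1 by simp
  qed (use prob_le_1[of "{x. cdf M x < b}"] in linarith)
qed

lemma measure_cdf_le_ge: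
  assumes atomless: "\<And>x. measure M {x} = 0" and "a \<le> 1"
  shows "a \<le> measure M {x. cdf M x \<le> a}"
proof (cases "0 < a \<and> a < 1")
  case True
  then obtain t where t: "cdf M t = a"
    using cdf_attains_value[OF atomless] by blast
  then have "{..t} \<subseteq> {x. cdf M x \<le> a}"
    using cdf_nondecreasing by auto
  then have "measure M {..t} \<le> measure M {x. cdf M x \<le> a}"
    by (intro finite_measure_mono) auto
  then show ?thesis
    using t by (simp add: cdf_def2)
next
  case False
  then consider "a \<le> 0" | "a = 1"
    using \<open>a \<le> 1\<close> by linarith
  then show ?thesis
  proof cases
    case 2
    then have "{x. cdf M x \<le> a} = space M"
      using cdf_bounded_prob by auto
    then have "measure M {x. cdf M x \<le> a} = 1"
      using prob_space by simp
    then show ?thesis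
      using 2 by simp
  qed (use measure_nonneg[of M "{x. cdf M x \<le> a}"] in linarith)
qed

lemma measure_cdf_between_le:
  assumes atomless: "\<And>x. measure M {x} = 0" and "a \<le> b"
  shows "measure M {x. a < cdf M x \<and> cdf M x < b} \<le> b - a"
proof (cases "a < b \<and> 0 \<le> b \<and> a \<le> 1")
  case True
  have "{x. a < cdf M x \<and> cdf M x < b} = {x. cdf M x < b} - {x. cdf M x \<le> a}"
    by auto
  moreover have "{x. cdf M x \<le> a} \<subseteq> {x. cdf M x < b}"
    using True by auto
  ultimately show ?thesis
    using measure_cdf_less_le[OF atomless, of b] measure_cdf_le_ge[OF atomless, of a] True
    by (simp add: finite_measure_Diff)
next
  case False
  have empty: "{x. a < cdf M x \<and> cdf M x < b} = {}"
  proof (intro equals0I)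
    fix x assume "x \<in> {x. a < cdf M x \<and> cdf M x < b}"
    with False cdf_nonneg[of x] cdf_bounded_prob[of x] show False
      by auto
  qed
  show ?thesis
    unfolding empty using \<open>a \<le> b\<close> by simp
qed

lemma interval_subset_quantile_block:
  assumes "u \<le> v" "measure M {u..v} < 1 / real K" "0 < K"
  obtains r where "r \<le> K" "{u..v} \<subseteq> quantile_block M K r"
proof
  define r where "r = nat \<lfloor>real K * cdf M u\<rfloor>"
  have r: "real r \<le> real K * cdf M u" "real K * cdf M u < real r + 1"
    unfolding r_def using cdf_nonneg[of u] zero_le_mult_iff[of "real K" "cdf M u"] by linarith+
  show "r \<le> K"
    using r(1) cdf_bounded_prob[of u] \<open>0 < K\<close> mult_left_le[of "cdf M u" "real K"] by linarith
  have "measure M {u<..v} \<le> measure M {u..v}"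
    by (intro finite_measure_mono) auto
  then have "cdf M v - cdf M u \<le> measure M {u..v}"
    using \<open>u \<le> v\<close> cdf_diff_eq[of u v] by (cases "u = v") auto
  then have "real K * (cdf M v - cdf M u) \<le> real K * measure M {u..v}"
    by (intro mult_left_mono) auto
  moreover have "real K * measure M {u..v} < 1"
    using assms(2,3) by (simp add: field_simps)
  ultimately have "real K * cdf M v < real K * cdf M u + 1"
    by (simp add: right_diff_distrib)
  show "{u..v} \<subseteq> quantile_block M K r"
  proof
    fix x assume "x \<in> {u..v}"
    then have "real K * cdf M u \<le> real K * cdf M x" "real K * cdf M x \<le> real K * cdf M v"
      using cdf_nondecreasing by (auto intro: mult_left_mono)
    then have "real r - 1 < real K * cdf M x" "real K * cdf M x < real r + 2"
      using r \<open>real K * cdf M v < real K * cdf M u + 1\<close> by linarith+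
    then show "x \<in> quantile_block M K r"
      using \<open>0 < K\<close> by (simp add: quantile_block_def field_simps)
  qed
qed

lemma quantile_block_sets [measurable]: "quantile_block M K r \<in> sets borel"
  unfolding quantile_block_def by measurable

lemma measure_quantile_block_le:
  assumes atomless: "\<And>x. measure M {x} = 0" and "0 < K"
  shows "measure M (quantile_block M K r) \<le> 3 / real K"
  using measure_cdf_between_le[OF atomless, of "(real r - 1) / real K" "(real r + 2) / real K"] \<open>0 < K\<close>
  by (simp add: quantile_block_def divide_right_mono diff_divide_distrib[symmetric])

end

section \<open>Integer translates of a compactly supported function\<close>

definition shift_window :: "real \<Rightarrow> nat \<Rightarrow> int set" where
  "shift_window t R = {\<lfloor>t\<rfloor> - int R .. \<lfloor>t\<rfloor> + int R}"

lemma mem_shift_window: "\<bar>t - real_of_int k\<bar> \<le> real R \<Longrightarrow> k \<in> shift_window t R"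
  unfolding shift_window_def by (auto simp: abs_le_iff) linarith+

lemma finite_shift_window [simp]: "finite (shift_window t R)"
  by (simp add: shift_window_def)

lemma card_shift_window [simp]: "card (shift_window t R) = 2 * R + 1"
  by (simp add: shift_window_def)

definition shift_support :: "real \<Rightarrow> nat \<Rightarrow> int \<Rightarrow> real set" where
  "shift_support c R k = {x. \<bar>c * x - real_of_int k\<bar> \<le> real R}"

lemma shift_support_eq_interval:
  "0 < c \<Longrightarrow> shift_support c R k = {(real_of_int k - real R) / c .. (real_of_int k + real R) / c}"
  by (auto simp: shift_support_def abs_le_iff field_simps)

lemma shift_support_sets [measurable]: "shift_support c R k \<in> sets borel"
  unfolding shift_support_def by measurable

definition heavy_shifts :: "real measure \<Rightarrow> real \<Rightarrow> nat \<Rightarrow> nat \<Rightarrow> int set" where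
  "heavy_shifts Q c R K = {k. 1 / real K \<le> measure Q (shift_support c R k)}"

lemma (in real_distribution) finite_card_heavy_shifts:
  assumes "0 < K"
  shows "finite (heavy_shifts M c R K) \<and> card (heavy_shifts M c R K) \<le> (2 * R + 1) * K"
proof (rule finite_if_finite_subsets_card_bdd)
  fix G assume G: "G \<subseteq> heavy_shifts M c R K" "finite G"
  have integrable_indicator: "integrable M (indicator (shift_support c R k) :: real \<Rightarrow> real)" for k
    by (simp add: integrable_indicator_iff less_top[symmetric])
  have overlap: "(\<Sum>k\<in>G. indicator (shift_support c R k) x) \<le> real (2 * R + 1)" for x
  proof -
    have "(\<Sum>k\<in>G. indicator (shift_support c R k) x)
        = (\<Sum>k\<in>G \<inter> shift_window (c * x) R. indicator (shift_support c R k) x :: real)"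
      using G(2) by (intro sum.mono_neutral_right)
        (auto simp: shift_support_def indicator_def mem_shift_window)
    also have "\<dots> \<le> (\<Sum>k\<in>shift_window (c * x) R. indicator (shift_support c R k) x)"
      by (intro sum_mono2) auto
    also have "\<dots> \<le> (\<Sum>k\<in>shift_window (c * x) R. 1)"
      by (intro sum_mono) (auto simp: indicator_def)
    finally show ?thesis
      by simp
  qed
  have "real (card G) / real K \<le> (\<Sum>k\<in>G. measure M (shift_support c R k))"
    using G(1) sum_mono[of G "\<lambda>_. 1 / real K" "\<lambda>k. measure M (shift_support c R k)"]
    by (auto simp: heavy_shifts_def)
  also have "\<dots> = (\<Sum>k\<in>G. \<integral>x. indicator (shift_support c R k) x \<partial>M)"
    by simp
  also have "\<dots> = (\<integral>x. (\<Sum>k\<in>G. indicator (shift_support c R k) x) \<partial>M)"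
    by (rule Bochner_Integration.integral_sum[symmetric]) (rule integrable_indicator)
  also have "\<dots> \<le> (\<integral>x. real (2 * R + 1) \<partial>M)"
    by (intro integral_mono overlap Bochner_Integration.integrable_sum integrable_indicator) simp
  also have "\<dots> = real (2 * R + 1)"
    using prob_space by simp
  finally have "real (card G) \<le> real ((2 * R + 1) * K)"
    using assms by (simp add: field_simps)
  then show "card G \<le> (2 * R + 1) * K"
    by (simp only: of_nat_le_iff)
qed

definition scaled_shift :: "(real \<Rightarrow> real) \<Rightarrow> real \<Rightarrow> real \<Rightarrow> int \<Rightarrow> real \<Rightarrow> real" where
  "scaled_shift h a c k x = a * h (c * x - real_of_int k)"

lemma borel_measurable_scaled_shift [measurable]:
  assumes [measurable]: "h \<in> borel_measurable borel"
  shows "scaled_shift h a c k \<in> borel_measurable borel"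
  unfolding scaled_shift_def by measurable

lemma abs_scaled_shift_le: "(\<And>x. \<bar>h x\<bar> \<le> B) \<Longrightarrow> 0 \<le> a \<Longrightarrow> \<bar>scaled_shift h a c k x\<bar> \<le> a * B"
  by (simp add: scaled_shift_def abs_mult mult_left_mono)

definition level_estimator ::
  "(real \<Rightarrow> real) \<Rightarrow> real \<Rightarrow> real \<Rightarrow> nat \<Rightarrow> (nat \<Rightarrow> real) \<Rightarrow> real \<Rightarrow> real" where
  "level_estimator h a c n Ys y =
     (\<Sum>\<^sub>\<infinity>k::int. (1 / real n * (\<Sum>i\<in>{1..n}. scaled_shift h a c k (Ys i))) * scaled_shift h a c k y)"

lemma wavelet_est_eq_level_estimators:
  "wavelet_est \<phi> \<psi> (int N) n Ys y =
     level_estimator \<phi> 1 1 n Ys y + (\<Sum>l\<le>N. level_estimator \<psi> (2 powr (real l / 2)) (2 ^ l) n Ys y)"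
proof -
  have "{l. int l \<le> int N} = {..N}"
    by auto
  moreover have "wphi \<phi> k = scaled_shift \<phi> 1 1 k"
    and "wpsi \<psi> l k = scaled_shift \<psi> (2 powr (real l / 2)) (2 ^ l) k"
    for k l
    by (simp_all add: fun_eq_iff wphi_def wpsi_def scaled_shift_def)
  ultimately show ?thesis
    unfolding wavelet_est_def level_estimator_def by simp
qed

lemma level_estimator_eq_window_sum:
  assumes supp: "\<And>x. h x \<noteq> 0 \<Longrightarrow> \<bar>x\<bar> \<le> real R"
  shows "level_estimator h a c n Ys y =
    (\<Sum>k\<in>shift_window (c * y) R.
       (1 / real n * (\<Sum>i\<in>{1..n}. scaled_shift h a c k (Ys i))) * scaled_shift h a c k y)"
  unfolding level_estimator_def
proof (rule infsum_eq_sum_vanishing_outside)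
  fix k assume "k \<notin> shift_window (c * y) R"
  then have "h (c * y - real_of_int k) = 0"
    using supp mem_shift_window by blast
  then show "(1 / real n * (\<Sum>i\<in>{1..n}. scaled_shift h a c k (Ys i))) * scaled_shift h a c k y = 0"
    by (simp add: scaled_shift_def)
qed simp

section \<open>Uniform concentration of sample sums over translates\<close>

locale iid_sample = prob_space M for M :: "'a measure" +
  fixes Y :: "nat \<Rightarrow> 'a \<Rightarrow> real" and Q :: "real measure"
  assumes indep_Y: "indep_vars (\<lambda>_. borel) Y UNIV"
    and distr_Y: "\<And>i. distr M borel (Y i) = Q"
begin

lemma random_variable_Y [measurable]: "Y i \<in> borel_measurable M"
  using indep_Y unfolding indep_vars_def by auto

sublocale Q: real_distribution Q
  using real_distribution_distr[OF random_variable_Y] distr_Y by metis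

lemma expectation_comp_Y:
  "(g :: real \<Rightarrow> real) \<in> borel_measurable borel \<Longrightarrow> expectation (\<lambda>\<omega>. g (Y i \<omega>)) = (\<integral>x. g x \<partial>Q)"
  using integral_distr[of "Y i" M borel g] distr_Y[of i] by simp

definition sample_sum :: "nat \<Rightarrow> (real \<Rightarrow> real) \<Rightarrow> 'a \<Rightarrow> real" where
  "sample_sum n g \<omega> = (\<Sum>i\<in>{1..n}. g (Y i \<omega>))"

definition deviation :: "nat \<Rightarrow> (real \<Rightarrow> real) \<Rightarrow> 'a \<Rightarrow> real" where
  "deviation n g \<omega> = sample_sum n g \<omega> - real n * (\<integral>x. g x \<partial>Q)"

lemma borel_measurable_sample_sum [measurable]:
  assumes [measurable]: "g \<in> borel_measurable borel"
  shows "sample_sum n g \<in> borel_measurable M"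
  unfolding sample_sum_def by measurable

lemma
  assumes [measurable]: "g \<in> borel_measurable borel" and bounded: "\<And>x. \<bar>g x\<bar> \<le> B"
  shows integrable_sample_sum: "integrable M (sample_sum n g)"
    and expectation_sample_sum: "expectation (sample_sum n g) = real n * (\<integral>x. g x \<partial>Q)"
proof -
  have integrable: "integrable M (\<lambda>\<omega>. g (Y i \<omega>))" for i
  proof (rule integrable_const_bound[where B = B])
    show "AE \<omega> in M. norm (g (Y i \<omega>)) \<le> B"
      using bounded by simp
  qed measurable
  then show "integrable M (sample_sum n g)"
    unfolding sample_sum_def by (intro Bochner_Integration.integrable_sum)
  show "expectation (sample_sum n g) = real n * (\<integral>x. g x \<partial>Q)"
    unfolding sample_sum_def using integrable
    by (simp add: Bochner_Integration.integral_sum expectation_comp_Y)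
qed

lemma indep_vars_comp_Y:
  "g \<in> borel_measurable borel \<Longrightarrow> indep_vars (\<lambda>_. borel) (\<lambda>i \<omega>. g (Y i \<omega>)) I"
  using indep_vars_compose2[OF indep_vars_subset[OF indep_Y subset_UNIV, of I], of "\<lambda>_. g" "\<lambda>_. borel"]
  by blast

lemma prob_deviation_ge_le:
  assumes g: "g \<in> borel_measurable borel" and bounded: "\<And>x. \<bar>g x\<bar> \<le> B"
    and "0 < B" "0 < n" "0 \<le> x"
  shows "prob {\<omega>\<in>space M. real n * x \<le> \<bar>deviation n g \<omega>\<bar>} \<le> 2 * exp (- real n * x\<^sup>2 / (2 * B\<^sup>2))"
proof -
  interpret H: Hoeffding_ineq M "{1..n}" "\<lambda>i \<omega>. g (Y i \<omega>)" "\<lambda>_. - B" "\<lambda>_. B"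
    "\<Sum>i\<in>{1..n}. expectation (\<lambda>\<omega>. g (Y i \<omega>))"
  proof unfold_locales
    show "indep_vars (\<lambda>_. borel) (\<lambda>i \<omega>. g (Y i \<omega>)) {1..n}"
      using indep_vars_comp_Y[OF g] .
    show "AE \<omega> in M. g (Y i \<omega>) \<in> {- B..B}" for i
      using bounded by (intro AE_I2) (metis abs_le_iff atLeastAtMost_iff minus_le_iff)
  qed simp
  have mean: "(\<Sum>i\<in>{1..n}. expectation (\<lambda>\<omega>. g (Y i \<omega>))) = real n * (\<integral>x. g x \<partial>Q)"
    by (simp add: expectation_comp_Y g)
  have range: "(\<Sum>i\<in>{1..n}. (B - - B)\<^sup>2) = real n * (2 * B)\<^sup>2"
    by simp
  have "prob {\<omega>\<in>space M. real n * x \<le> \<bar>deviation n g \<omega>\<bar>}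
      \<le> 2 * exp (-2 * (real n * x)\<^sup>2 / (real n * (2 * B)\<^sup>2))"
    using H.Hoeffding_ineq_abs_ge[of "real n * x"] assms
    unfolding mean range deviation_def sample_sum_def by simp
  also have "-2 * (real n * x)\<^sup>2 / (real n * (2 * B)\<^sup>2) = - real n * x\<^sup>2 / (2 * B\<^sup>2)"
    using assms by (simp add: power2_eq_square)
  finally show ?thesis .
qed

lemma prob_sample_sum_ge_le:
  assumes g: "g \<in> borel_measurable borel" and range: "\<And>x. g x \<in> {0..1}" and "0 < n" "0 \<le> t"
  shows "prob {\<omega>\<in>space M. real n * ((\<integral>x. g x \<partial>Q) + t) \<le> sample_sum n g \<omega>} \<le> exp (-2 * real n * t\<^sup>2)"
proof -
  interpret H: Hoeffding_ineq M "{1..n}" "\<lambda>i \<omega>. g (Y i \<omega>)" "\<lambda>_. 0" "\<lambda>_. 1"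
    "\<Sum>i\<in>{1..n}. expectation (\<lambda>\<omega>. g (Y i \<omega>))"
  proof unfold_locales
    show "indep_vars (\<lambda>_. borel) (\<lambda>i \<omega>. g (Y i \<omega>)) {1..n}"
      using indep_vars_comp_Y[OF g] .
  qed (use range in simp_all)
  have mean: "(\<Sum>i\<in>{1..n}. expectation (\<lambda>\<omega>. g (Y i \<omega>))) = real n * (\<integral>x. g x \<partial>Q)"
    by (simp add: expectation_comp_Y g)
  have "prob {\<omega>\<in>space M. real n * ((\<integral>x. g x \<partial>Q) + t) \<le> sample_sum n g \<omega>}
      \<le> exp (-2 * (real n * t)\<^sup>2 / real n)"
    using H.Hoeffding_ineq_ge[of "real n * t"] assms
    unfolding mean sample_sum_def by (simp add: distrib_left)
  also have "-2 * (real n * t)\<^sup>2 / real n = -2 * real n * t\<^sup>2"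
    using assms by (simp add: power2_eq_square)
  finally show ?thesis .
qed

definition overfull_block_event :: "nat \<Rightarrow> nat \<Rightarrow> real \<Rightarrow> 'a set" where
  "overfull_block_event n K t = (\<Union>r\<le>K. {\<omega>\<in>space M.
     real n * (measure Q (quantile_block Q K r) + t) \<le> sample_sum n (indicator (quantile_block Q K r)) \<omega>})"

lemma overfull_block_event_sets [measurable]: "overfull_block_event n K t \<in> sets M"
  unfolding overfull_block_event_def by measurable

lemma prob_overfull_block_event_le:
  assumes "0 < n" "0 \<le> t"
  shows "prob (overfull_block_event n K t) \<le> real (K + 1) * exp (-2 * real n * t\<^sup>2)"
proof -
  have "prob (overfull_block_event n K t) \<le> (\<Sum>r\<le>K. prob {\<omega>\<in>space M.
     real n * (measure Q (quantile_block Q K r) + t) \<le> sample_sum n (indicator (quantile_block Q K r)) \<omega>})"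
    unfolding overfull_block_event_def by (intro measure_UNION_le) auto
  also have "\<dots> \<le> (\<Sum>r\<le>K. exp (-2 * real n * t\<^sup>2))"
  proof (intro sum_mono)
    fix r
    have "indicator (quantile_block Q K r) x \<in> {0..1::real}" for x
      by (simp add: indicator_def)
    then show "prob {\<omega>\<in>space M. real n * (measure Q (quantile_block Q K r) + t)
        \<le> sample_sum n (indicator (quantile_block Q K r)) \<omega>} \<le> exp (-2 * real n * t\<^sup>2)"
      using prob_sample_sum_ge_le[of "indicator (quantile_block Q K r)"] assms by simp
  qed
  finally show ?thesis
    by simp
qed

lemma abs_sample_sum_le_indicator:
  assumes bounded: "\<And>x. \<bar>g x\<bar> \<le> A" and supp: "\<And>x. g x \<noteq> 0 \<Longrightarrow> x \<in> S"
  shows "\<bar>sample_sum n g \<omega>\<bar> \<le> A * sample_sum n (indicator S) \<omega>"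
proof -
  have "\<bar>g x\<bar> \<le> A * indicator S x" for x
    using supp[of x] bounded[of x] by (cases "g x = 0") (auto simp: indicator_def)
  then show ?thesis
    unfolding sample_sum_def sum_distrib_left by (rule order_trans[OF sum_abs sum_mono])
qed

lemma abs_deviation_le_if_light_support:
  assumes atomless: "\<And>x. measure Q {x} = 0"
    and g: "g \<in> borel_measurable borel" and bounded: "\<And>x. \<bar>g x\<bar> \<le> A"
    and supp: "\<And>x. g x \<noteq> 0 \<Longrightarrow> x \<in> {u..v}"
    and "u \<le> v" and light: "measure Q {u..v} < 1 / real K" and "0 < K"
    and \<omega>: "\<omega> \<in> space M" "\<omega> \<notin> overfull_block_event n K t"
  shows "\<bar>deviation n g \<omega>\<bar> \<le> real n * A * (4 / real K + t)"
proof -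
  obtain r where "r \<le> K" and block: "{u..v} \<subseteq> quantile_block Q K r"
    using Q.interval_subset_quantile_block[OF \<open>u \<le> v\<close> light \<open>0 < K\<close>] by blast
  have "0 \<le> A"
    using bounded[of 0] by simp
  have "sample_sum n (indicator (quantile_block Q K r)) \<omega> < real n * (measure Q (quantile_block Q K r) + t)"
    using \<omega> \<open>r \<le> K\<close> by (auto simp: overfull_block_event_def not_le)
  also have "\<dots> \<le> real n * (3 / real K + t)"
    using Q.measure_quantile_block_le[OF atomless \<open>0 < K\<close>] by (intro mult_left_mono) auto
  finally have "A * sample_sum n (indicator (quantile_block Q K r)) \<omega> \<le> A * (real n * (3 / real K + t))"
    using \<open>0 \<le> A\<close> by (intro mult_left_mono) auto
  moreover have "\<bar>sample_sum n g \<omega>\<bar> \<le> A * sample_sum n (indicator (quantile_block Q K r)) \<omega>"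
    using supp block by (intro abs_sample_sum_le_indicator[OF bounded]) auto
  ultimately have sample: "\<bar>sample_sum n g \<omega>\<bar> \<le> A * (real n * (3 / real K + t))"
    by linarith
  have "\<bar>\<integral>x. g x \<partial>Q\<bar> \<le> A * measure Q {u..v}"
    using bounded g supp by (intro Q.abs_integral_le_of_support Q.integrable_const_bound[where B = A]) auto
  also have "\<dots> \<le> A / real K"
    using mult_left_mono[OF less_imp_le[OF light] \<open>0 \<le> A\<close>] by simp
  finally have "\<bar>real n * (\<integral>x. g x \<partial>Q)\<bar> \<le> real n * (A / real K)"
    unfolding abs_mult abs_of_nat by (rule mult_left_mono) auto
  with sample have "\<bar>deviation n g \<omega>\<bar> \<le> A * (real n * (3 / real K + t)) + real n * (A / real K)"
    unfolding deviation_def using abs_triangle_ineq4[of "sample_sum n g \<omega>"] by linarith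
  also have "\<dots> = real n * A * (4 / real K + t)"
    by (simp add: field_simps)
  finally show ?thesis .
qed

definition heavy_deviation_event ::
  "nat \<Rightarrow> (real \<Rightarrow> real) \<Rightarrow> real \<Rightarrow> real \<Rightarrow> nat \<Rightarrow> nat \<Rightarrow> real \<Rightarrow> 'a set" where
  "heavy_deviation_event n h a c R K x = (\<Union>k\<in>heavy_shifts Q c R K.
     {\<omega>\<in>space M. real n * x \<le> \<bar>deviation n (scaled_shift h a c k) \<omega>\<bar>})"

lemma heavy_deviation_event_sets [measurable]:
  assumes [measurable]: "h \<in> borel_measurable borel"
  shows "heavy_deviation_event n h a c R K x \<in> sets M"
  unfolding heavy_deviation_event_def deviation_def by (intro sets.countable_UN) auto

lemma prob_heavy_deviation_event_le:
  assumes h: "h \<in> borel_measurable borel" and bounded: "\<And>x. \<bar>h x\<bar> \<le> B"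
    and "0 < B" "0 < a" "0 < K" "0 < n" "0 \<le> x"
  shows "prob (heavy_deviation_event n h a c R K x)
    \<le> real ((2 * R + 1) * K) * (2 * exp (- real n * x\<^sup>2 / (2 * (a * B)\<^sup>2)))"
proof -
  have heavy: "finite (heavy_shifts Q c R K)" "card (heavy_shifts Q c R K) \<le> (2 * R + 1) * K"
    using Q.finite_card_heavy_shifts[OF \<open>0 < K\<close>] by auto
  have "prob (heavy_deviation_event n h a c R K x) \<le> (\<Sum>k\<in>heavy_shifts Q c R K.
      prob {\<omega>\<in>space M. real n * x \<le> \<bar>deviation n (scaled_shift h a c k) \<omega>\<bar>})"
    unfolding heavy_deviation_event_def deviation_def using heavy(1) h by (intro measure_UNION_le) auto
  also have "\<dots> \<le> (\<Sum>k\<in>heavy_shifts Q c R K. 2 * exp (- real n * x\<^sup>2 / (2 * (a * B)\<^sup>2)))"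
    using assms abs_scaled_shift_le[OF bounded]
    by (intro sum_mono prob_deviation_ge_le) (auto intro: mult_pos_pos)
  also have "\<dots> \<le> real ((2 * R + 1) * K) * (2 * exp (- real n * x\<^sup>2 / (2 * (a * B)\<^sup>2)))"
    using heavy(2) by (simp add: mult_right_mono del: of_nat_mult)
  finally show ?thesis .
qed

lemma abs_deviation_scaled_shift_le:
  assumes atomless: "\<And>x. measure Q {x} = 0"
    and h: "h \<in> borel_measurable borel" and bounded: "\<And>x. \<bar>h x\<bar> \<le> B"
    and supp: "\<And>x. h x \<noteq> 0 \<Longrightarrow> \<bar>x\<bar> \<le> real R"
    and "0 < a" "0 < c" "0 < K"
    and \<omega>: "\<omega> \<in> space M" "\<omega> \<notin> heavy_deviation_event n h a c R K x" "\<omega> \<notin> overfull_block_event n K t"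
    and x: "a * B * (4 / real K + t) \<le> x"
  shows "\<bar>deviation n (scaled_shift h a c k) \<omega>\<bar> \<le> real n * x"
proof (cases "k \<in> heavy_shifts Q c R K")
  case True
  then show ?thesis
    using \<omega> by (auto simp: heavy_deviation_event_def)
next
  case False
  note support = shift_support_eq_interval[OF \<open>0 < c\<close>, of R k]
  have "\<bar>deviation n (scaled_shift h a c k) \<omega>\<bar> \<le> real n * (a * B) * (4 / real K + t)"
  proof (rule abs_deviation_le_if_light_support[OF atomless _ _ _ _ _ \<open>0 < K\<close> \<omega>(1,3)])
    show "\<bar>scaled_shift h a c k y\<bar> \<le> a * B" for y
      using abs_scaled_shift_le[OF bounded] \<open>0 < a\<close> by simp
    show "y \<in> {(real_of_int k - real R) / c .. (real_of_int k + real R) / c}"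
      if "scaled_shift h a c k y \<noteq> 0" for y
      using supp[of "c * y - real_of_int k"] that support by (auto simp: scaled_shift_def shift_support_def)
    show "measure Q {(real_of_int k - real R) / c .. (real_of_int k + real R) / c} < 1 / real K"
      using False support by (simp add: heavy_shifts_def)
  qed (use h \<open>0 < c\<close> in \<open>auto intro: divide_right_mono\<close>)
  also have "\<dots> \<le> real n * x"
    using x by (simp add: mult.assoc mult_left_mono)
  finally show ?thesis .
qed

definition centered_level_estimator ::
  "(real \<Rightarrow> real) \<Rightarrow> real \<Rightarrow> real \<Rightarrow> nat \<Rightarrow> 'a \<Rightarrow> real \<Rightarrow> real" where
  "centered_level_estimator h a c n \<omega> y = level_estimator h a c n (\<lambda>i. Y i \<omega>) y
     - expectation (\<lambda>\<omega>'. level_estimator h a c n (\<lambda>i. Y i \<omega>') y)"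

lemma
  assumes h: "h \<in> borel_measurable borel" and bounded: "\<And>x. \<bar>h x\<bar> \<le> B"
    and supp: "\<And>x. h x \<noteq> 0 \<Longrightarrow> \<bar>x\<bar> \<le> real R" and "0 \<le> a"
  shows integrable_level_estimator: "integrable M (\<lambda>\<omega>. level_estimator h a c n (\<lambda>i. Y i \<omega>) y)"
    and centered_level_estimator_eq: "centered_level_estimator h a c n \<omega> y =
      (\<Sum>k\<in>shift_window (c * y) R. deviation n (scaled_shift h a c k) \<omega> * scaled_shift h a c k y) / real n"
proof -
  let ?W = "shift_window (c * y) R"
  have level: "level_estimator h a c n (\<lambda>i. Y i \<omega>) y =
      (\<Sum>k\<in>?W. sample_sum n (scaled_shift h a c k) \<omega> * scaled_shift h a c k y) / real n" for \<omega>
  proof -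
    have "level_estimator h a c n (\<lambda>i. Y i \<omega>) y = (\<Sum>k\<in>?W.
        (1 / real n * (\<Sum>i\<in>{1..n}. scaled_shift h a c k (Y i \<omega>))) * scaled_shift h a c k y)"
      by (rule level_estimator_eq_window_sum[OF supp])
    then show ?thesis
      unfolding sample_sum_def sum_divide_distrib by simp
  qed
  have integrable: "integrable M (sample_sum n (scaled_shift h a c k))" for k
    using integrable_sample_sum[OF _ abs_scaled_shift_le[of h B, OF bounded \<open>0 \<le> a\<close>]] h by simp
  then show "integrable M (\<lambda>\<omega>. level_estimator h a c n (\<lambda>i. Y i \<omega>) y)"
    unfolding level by (intro integrable_divide Bochner_Integration.integrable_sum integrable_mult_left)
  have "expectation (\<lambda>\<omega>. level_estimator h a c n (\<lambda>i. Y i \<omega>) y) =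
      (\<Sum>k\<in>?W. real n * (\<integral>x. scaled_shift h a c k x \<partial>Q) * scaled_shift h a c k y) / real n"
    unfolding level
    using integrable expectation_sample_sum[OF _ abs_scaled_shift_le[of h B, OF bounded \<open>0 \<le> a\<close>]] h
    by (simp add: Bochner_Integration.integral_sum integrable_mult_left)
  then show "centered_level_estimator h a c n \<omega> y =
      (\<Sum>k\<in>?W. deviation n (scaled_shift h a c k) \<omega> * scaled_shift h a c k y) / real n"
    unfolding centered_level_estimator_def level deviation_def
    by (simp add: sum_subtractf diff_divide_distrib left_diff_distrib)
qed

lemma abs_centered_level_estimator_le:
  assumes h: "h \<in> borel_measurable borel" and bounded: "\<And>x. \<bar>h x\<bar> \<le> B"
    and supp: "\<And>x. h x \<noteq> 0 \<Longrightarrow> \<bar>x\<bar> \<le> real R" and "0 \<le> a" "0 < n"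
    and small: "\<And>k. \<bar>deviation n (scaled_shift h a c k) \<omega>\<bar> \<le> real n * x"
  shows "\<bar>centered_level_estimator h a c n \<omega> y\<bar> \<le> real (2 * R + 1) * (x * (a * B))"
proof -
  have "\<bar>\<Sum>k\<in>shift_window (c * y) R. deviation n (scaled_shift h a c k) \<omega> * scaled_shift h a c k y\<bar>
      \<le> (\<Sum>k\<in>shift_window (c * y) R. real n * x * (a * B))"
  proof (rule order_trans[OF sum_abs sum_mono])
    fix k
    have "\<bar>deviation n (scaled_shift h a c k) \<omega>\<bar> * \<bar>scaled_shift h a c k y\<bar> \<le> real n * x * (a * B)"
      using small[of k] abs_scaled_shift_le[of h B, OF bounded \<open>0 \<le> a\<close>]
      by (intro mult_mono) (auto intro: order_trans[OF abs_ge_zero])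
    then show "\<bar>deviation n (scaled_shift h a c k) \<omega> * scaled_shift h a c k y\<bar> \<le> real n * x * (a * B)"
      by (simp add: abs_mult)
  qed
  then show ?thesis
    using \<open>0 < n\<close> by (simp add: centered_level_estimator_eq[OF assms(1-4)] abs_divide field_simps)
qed

end

section \<open>The centred wavelet estimator\<close>

lemma block_count_margin:
  assumes "0 < s" "8 / s \<le> real K"
  shows "0 < K" "4 / real K + s / 2 \<le> s"
proof -
  have "0 < 8 / s"
    using assms(1) by simp
  then show "0 < K"
    using assms(2) by linarith
  then show "4 / real K + s / 2 \<le> s"
    using assms by (simp add: field_simps)
qed

definition log_rate :: "real \<Rightarrow> nat \<Rightarrow> real" where
  "log_rate \<beta> n = ln (real n) powr \<beta> / sqrt (real n)"

definition block_count :: "nat \<Rightarrow> nat" where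
  "block_count n = nat \<lceil>8 * sqrt (real n)\<rceil>"

lemma log_rate_block_count_bounds:
  assumes "1 \<le> ln (real n)" "0 \<le> \<beta>"
  shows "0 < n" "0 < log_rate \<beta> n" "0 < block_count n" "8 / log_rate \<beta> n \<le> real (block_count n)"
    "real (block_count n) \<le> 9 * real n" "real n * (log_rate \<beta> n)\<^sup>2 = ln (real n) powr (2 * \<beta>)"
proof -
  show "0 < n"
    using assms(1) by (cases n) auto
  then have "1 \<le> sqrt (real n)"
    by simp
  then have "sqrt (real n) \<le> real n"
    using real_sqrt_mult_self[of "real n"] mult_left_mono[of 1 "sqrt (real n)" "sqrt (real n)"] by simp
  have "1 \<le> ln (real n) powr \<beta>"
    using assms by (intro ge_one_powr_ge_zero) auto
  then show "0 < log_rate \<beta> n"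
    using \<open>0 < n\<close> by (auto simp: log_rate_def intro!: divide_pos_pos)
  have "8 / log_rate \<beta> n = 8 * sqrt (real n) / ln (real n) powr \<beta>"
    by (simp add: log_rate_def)
  also have "\<dots> \<le> 8 * sqrt (real n)"
    using \<open>1 \<le> ln (real n) powr \<beta>\<close> \<open>0 < n\<close> by (simp add: divide_le_eq)
  also have "\<dots> \<le> real (block_count n)"
    unfolding block_count_def by linarith
  finally show "8 / log_rate \<beta> n \<le> real (block_count n)" .
  show "0 < block_count n"
    using \<open>1 \<le> sqrt (real n)\<close> unfolding block_count_def by linarith
  show "real (block_count n) \<le> 9 * real n"
    using \<open>1 \<le> sqrt (real n)\<close> \<open>sqrt (real n) \<le> real n\<close> unfolding block_count_def by linarith
  show "real n * (log_rate \<beta> n)\<^sup>2 = ln (real n) powr (2 * \<beta>)"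
    using \<open>0 < n\<close> assms(1)
    by (simp add: log_rate_def power_divide power2_eq_square powr_add[symmetric])
qed

locale compact_wavelet_sample = iid_sample M Y Q for M :: "'a measure" and Y Q +
  fixes \<phi> \<psi> :: "real \<Rightarrow> real" and R :: nat and B\<^sub>\<phi> B\<^sub>\<psi> :: real
  assumes atomless: "\<And>x. measure Q {x} = 0"
    and measurable_\<phi> [measurable]: "\<phi> \<in> borel_measurable borel"
    and measurable_\<psi> [measurable]: "\<psi> \<in> borel_measurable borel"
    and bounded_\<phi>: "\<And>x. \<bar>\<phi> x\<bar> \<le> B\<^sub>\<phi>" and bounded_\<psi>: "\<And>x. \<bar>\<psi> x\<bar> \<le> B\<^sub>\<psi>"
    and bounds_pos: "0 < B\<^sub>\<phi>" "0 < B\<^sub>\<psi>"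
    and support_\<phi>: "\<And>x. \<phi> x \<noteq> 0 \<Longrightarrow> \<bar>x\<bar> \<le> real R"
    and support_\<psi>: "\<And>x. \<psi> x \<noteq> 0 \<Longrightarrow> \<bar>x\<bar> \<le> real R"
begin

lemma wavelet_est_minus_expectation:
  "wavelet_est \<phi> \<psi> (int N) n (\<lambda>i. Y i \<omega>) y - expectation (\<lambda>\<omega>'. wavelet_est \<phi> \<psi> (int N) n (\<lambda>i. Y i \<omega>') y)
    = centered_level_estimator \<phi> 1 1 n \<omega> y
      + (\<Sum>l\<le>N. centered_level_estimator \<psi> (2 powr (real l / 2)) (2 ^ l) n \<omega> y)"
proof -
  have "expectation (\<lambda>\<omega>'. wavelet_est \<phi> \<psi> (int N) n (\<lambda>i. Y i \<omega>') y)
    = expectation (\<lambda>\<omega>'. level_estimator \<phi> 1 1 n (\<lambda>i. Y i \<omega>') y)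
      + (\<Sum>l\<le>N. expectation (\<lambda>\<omega>'. level_estimator \<psi> (2 powr (real l / 2)) (2 ^ l) n (\<lambda>i. Y i \<omega>') y))"
    unfolding wavelet_est_eq_level_estimators
    using integrable_level_estimator[OF measurable_\<phi> bounded_\<phi> support_\<phi>]
      integrable_level_estimator[OF measurable_\<psi> bounded_\<psi> support_\<psi>]
    by (simp add: Bochner_Integration.integral_sum)
  then show ?thesis
    unfolding wavelet_est_eq_level_estimators centered_level_estimator_def
    by (simp add: sum_subtractf)
qed

text \<open>The factor \<open>1 + N - l\<close> makes the Hoeffding tails at level \<open>l\<close> decay like \<open>2^-(N-l)\<close>,
  so they can be summed over the levels, while the resulting bound on the estimator only grows like
  \<open>\<Sum>l\<le>N. 2^l (1 + N - l) = O(2^N)\<close>.\<close>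

definition level_threshold :: "real \<Rightarrow> nat \<Rightarrow> nat \<Rightarrow> real" where
  "level_threshold s N l = 2 powr (real l / 2) * B\<^sub>\<psi> * s * (1 + real (N - l))"

definition bad_event :: "nat \<Rightarrow> real \<Rightarrow> nat \<Rightarrow> nat \<Rightarrow> 'a set" where
  "bad_event n s K N =
     heavy_deviation_event n \<phi> 1 1 R K (B\<^sub>\<phi> * s)
     \<union> (\<Union>l\<le>N. heavy_deviation_event n \<psi> (2 powr (real l / 2)) (2 ^ l) R K (level_threshold s N l))
     \<union> overfull_block_event n K (s / 2)"

lemma bad_event_sets [measurable]: "bad_event n s K N \<in> sets M"
  unfolding bad_event_def by measurable

lemma prob_mother_level_event_le:
  assumes "0 < n" "0 < K" "0 < s" and L: "2 \<le> real n * s\<^sup>2"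
  shows "prob (heavy_deviation_event n \<psi> (2 powr (real l / 2)) (2 ^ l) R K (level_threshold s N l))
    \<le> real ((2 * R + 1) * K) * (2 * (exp (- real n * s\<^sup>2 / 2) * (1/2) ^ (N - l)))"
proof -
  define a where "a = 2 powr (real l / 2) * B\<^sub>\<psi>"
  define m where "m = 1 + real (N - l)"
  have "0 < a"
    using bounds_pos by (simp add: a_def)
  then have exponent: "- real n * (level_threshold s N l)\<^sup>2 / (2 * (2 powr (real l / 2) * B\<^sub>\<psi>)\<^sup>2)
      = - (real n * s\<^sup>2) * (1 + real (N - l))\<^sup>2 / 2"
    unfolding level_threshold_def a_def[symmetric] mult.assoc[of a] m_def[symmetric]
    by (simp add: power_mult_distrib)
  have "prob (heavy_deviation_event n \<psi> (2 powr (real l / 2)) (2 ^ l) R K (level_threshold s N l))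
      \<le> real ((2 * R + 1) * K)
         * (2 * exp (- real n * (level_threshold s N l)\<^sup>2 / (2 * (2 powr (real l / 2) * B\<^sub>\<psi>)\<^sup>2)))"
    using assms bounds_pos
    by (intro prob_heavy_deviation_event_le[OF measurable_\<psi> bounded_\<psi>]) (auto simp: level_threshold_def)
  also have "\<dots> = real ((2 * R + 1) * K) * (2 * exp (- (real n * s\<^sup>2) * (1 + real (N - l))\<^sup>2 / 2))"
    unfolding exponent ..
  also have "\<dots> \<le> real ((2 * R + 1) * K) * (2 * (exp (- real n * s\<^sup>2 / 2) * (1/2) ^ (N - l)))"
    using exp_quadratic_tail_le[OF L, of "N - l"] by (intro mult_left_mono) auto
  finally show ?thesis .
qed

lemma prob_bad_event_le:
  assumes "0 < n" "0 < K" "0 < s" and L: "2 \<le> real n * s\<^sup>2"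
  shows "prob (bad_event n s K N) \<le> real (6 * (2 * R + 1) + 2) * real K * exp (- real n * s\<^sup>2 / 2)"
proof -
  define C where "C = real ((2 * R + 1) * K)"
  define E where "E = exp (- real n * s\<^sup>2 / 2)"
  have "prob (heavy_deviation_event n \<phi> 1 1 R K (B\<^sub>\<phi> * s)) \<le> C * (2 * E)"
    using prob_heavy_deviation_event_le[OF measurable_\<phi> bounded_\<phi>, of 1 K n "B\<^sub>\<phi> * s" 1 R] assms bounds_pos
    by (simp add: C_def E_def power_mult_distrib)
  moreover note prob_mother_level_event_le[OF assms, of l N for l, folded C_def E_def]
  moreover have "prob (overfull_block_event n K (s / 2)) \<le> real (K + 1) * E"
    using prob_overfull_block_event_le[of n "s / 2" K] assms
    by (simp add: E_def power_divide)
  ultimately have "prob (bad_event n s K N)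
      \<le> C * (2 * E) + (\<Sum>l\<le>N. C * (2 * (E * (1/2) ^ (N - l)))) + real (K + 1) * E"
    unfolding bad_event_def
    by (intro measure_Un_le[THEN order_trans] measure_UNION_le[THEN order_trans] add_mono sum_mono)
       (auto simp: sets.finite_UN)
  also have "\<dots> = (2 * C + 2 * C * (\<Sum>l\<le>N. (1/2) ^ (N - l)) + real (K + 1)) * E"
    by (simp add: sum_distrib_left algebra_simps)
  also have "\<dots> \<le> (6 * C + 2 * real K) * E"
  proof (intro mult_right_mono)
    have "2 * C * (\<Sum>l\<le>N. (1/2) ^ (N - l)) \<le> 2 * C * 2"
      using sum_half_powers_le[of N] by (intro mult_left_mono) (auto simp: C_def)
    then show "2 * C + 2 * C * (\<Sum>l\<le>N. (1/2) ^ (N - l)) + real (K + 1) \<le> 6 * C + 2 * real K"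
      using \<open>0 < K\<close> by simp
  qed (simp add: E_def)
  also have "\<dots> \<le> real (6 * (2 * R + 1) + 2) * real K * E"
    by (simp add: C_def algebra_simps)
  finally show ?thesis
    by (simp add: E_def)
qed

lemma sum_level_thresholds_le:
  assumes "0 \<le> s"
  shows "(\<Sum>l\<le>N. level_threshold s N l * (2 powr (real l / 2) * B\<^sub>\<psi>)) \<le> 4 * B\<^sub>\<psi>\<^sup>2 * s * 2 ^ N"
proof -
  have "level_threshold s N l * (2 powr (real l / 2) * B\<^sub>\<psi>) = B\<^sub>\<psi>\<^sup>2 * s * (2 ^ l * (1 + real (N - l)))" for l
  proof -
    have "2 powr (real l / 2) * 2 powr (real l / 2) = (2::real) ^ l"
      by (simp add: powr_add[symmetric] powr_realpow)
    then show ?thesis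
      unfolding level_threshold_def power2_eq_square by (simp add: ac_simps)
  qed
  then have "(\<Sum>l\<le>N. level_threshold s N l * (2 powr (real l / 2) * B\<^sub>\<psi>))
      = B\<^sub>\<psi>\<^sup>2 * s * (\<Sum>l\<le>N. 2 ^ l * (1 + real (N - l)))"
    by (simp add: sum_distrib_left)
  also have "\<dots> \<le> B\<^sub>\<psi>\<^sup>2 * s * (4 * 2 ^ N)"
    using assms by (intro mult_left_mono sum_pow2_weighted_le) auto
  finally show ?thesis
    by simp
qed

lemma abs_centered_father_level_le:
  assumes "0 < n" "0 < s" and K: "8 / s \<le> real K" and \<omega>: "\<omega> \<in> space M" "\<omega> \<notin> bad_event n s K N"
  shows "\<bar>centered_level_estimator \<phi> 1 1 n \<omega> y\<bar> \<le> real (2 * R + 1) * (B\<^sub>\<phi>\<^sup>2 * s)"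
proof -
  obtain "0 < K" "4 / real K + s / 2 \<le> s"
    using block_count_margin[OF \<open>0 < s\<close> K] by blast
  have "\<bar>centered_level_estimator \<phi> 1 1 n \<omega> y\<bar> \<le> real (2 * R + 1) * (B\<^sub>\<phi> * s * (1 * B\<^sub>\<phi>))"
  proof (intro abs_centered_level_estimator_le[OF measurable_\<phi> bounded_\<phi> support_\<phi> _ \<open>0 < n\<close>])
    show "\<bar>deviation n (scaled_shift \<phi> 1 1 k) \<omega>\<bar> \<le> real n * (B\<^sub>\<phi> * s)" for k
      using \<omega> \<open>4 / real K + s / 2 \<le> s\<close> bounds_pos
      by (intro abs_deviation_scaled_shift_le[OF atomless measurable_\<phi> bounded_\<phi> support_\<phi> _ _ \<open>0 < K\<close>])
         (auto simp: bad_event_def)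
  qed auto
  then show ?thesis
    by (simp add: power2_eq_square ac_simps)
qed

lemma abs_centered_mother_level_le:
  assumes "0 < n" "0 < s" and K: "8 / s \<le> real K" and \<omega>: "\<omega> \<in> space M" "\<omega> \<notin> bad_event n s K N"
    and "l \<le> N"
  shows "\<bar>centered_level_estimator \<psi> (2 powr (real l / 2)) (2 ^ l) n \<omega> y\<bar>
    \<le> real (2 * R + 1) * (level_threshold s N l * (2 powr (real l / 2) * B\<^sub>\<psi>))"
proof (intro abs_centered_level_estimator_le[OF measurable_\<psi> bounded_\<psi> support_\<psi> _ \<open>0 < n\<close>])
  obtain "0 < K" "4 / real K + s / 2 \<le> s"
    using block_count_margin[OF \<open>0 < s\<close> K] by blast
  moreover have "0 \<le> s * real (N - l)"
    using \<open>0 < s\<close> by simp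
  ultimately have "4 / real K + s / 2 \<le> s * (1 + real (N - l))"
    by (simp add: distrib_left)
  then have "2 powr (real l / 2) * B\<^sub>\<psi> * (4 / real K + s / 2) \<le> level_threshold s N l"
    unfolding level_threshold_def using bounds_pos by (simp add: mult.assoc)
  then show "\<bar>deviation n (scaled_shift \<psi> (2 powr (real l / 2)) (2 ^ l) k) \<omega>\<bar>
      \<le> real n * level_threshold s N l" for k
    using \<omega> \<open>l \<le> N\<close>
    by (intro abs_deviation_scaled_shift_le[OF atomless measurable_\<psi> bounded_\<psi> support_\<psi> _ _ \<open>0 < K\<close>])
       (auto simp: bad_event_def)
qed auto

lemma abs_wavelet_est_minus_expectation_le:
  assumes "0 < n" "0 < s" and K: "8 / s \<le> real K" and \<omega>: "\<omega> \<in> space M" "\<omega> \<notin> bad_event n s K N"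
  shows "\<bar>wavelet_est \<phi> \<psi> (int N) n (\<lambda>i. Y i \<omega>) y
           - expectation (\<lambda>\<omega>'. wavelet_est \<phi> \<psi> (int N) n (\<lambda>i. Y i \<omega>') y)\<bar>
    \<le> real (2 * R + 1) * (B\<^sub>\<phi>\<^sup>2 + 4 * B\<^sub>\<psi>\<^sup>2) * s * 2 ^ N"
proof -
  have "\<bar>wavelet_est \<phi> \<psi> (int N) n (\<lambda>i. Y i \<omega>) y
           - expectation (\<lambda>\<omega>'. wavelet_est \<phi> \<psi> (int N) n (\<lambda>i. Y i \<omega>') y)\<bar>
      \<le> \<bar>centered_level_estimator \<phi> 1 1 n \<omega> y\<bar>
        + (\<Sum>l\<le>N. \<bar>centered_level_estimator \<psi> (2 powr (real l / 2)) (2 ^ l) n \<omega> y\<bar>)"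
    unfolding wavelet_est_minus_expectation
    by (rule order_trans[OF abs_triangle_ineq add_left_mono[OF sum_abs]])
  also have "\<dots> \<le> real (2 * R + 1) * (B\<^sub>\<phi>\<^sup>2 * s)
      + real (2 * R + 1) * (\<Sum>l\<le>N. level_threshold s N l * (2 powr (real l / 2) * B\<^sub>\<psi>))"
    unfolding sum_distrib_left using assms
    by (intro add_mono sum_mono abs_centered_father_level_le abs_centered_mother_level_le) auto
  also have "\<dots> \<le> real (2 * R + 1) * (B\<^sub>\<phi>\<^sup>2 * s * 2 ^ N) + real (2 * R + 1) * (4 * B\<^sub>\<psi>\<^sup>2 * s * 2 ^ N)"
  proof (intro add_mono mult_left_mono)
    have "B\<^sub>\<phi>\<^sup>2 * s * 1 \<le> B\<^sub>\<phi>\<^sup>2 * s * 2 ^ N"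
      using \<open>0 < s\<close> by (intro mult_left_mono) auto
    then show "B\<^sub>\<phi>\<^sup>2 * s \<le> B\<^sub>\<phi>\<^sup>2 * s * 2 ^ N"
      by simp
  qed (use sum_level_thresholds_le[of s N] \<open>0 < s\<close> in auto)
  also have "\<dots> = real (2 * R + 1) * (B\<^sub>\<phi>\<^sup>2 + 4 * B\<^sub>\<psi>\<^sup>2) * s * 2 ^ N"
    by (simp add: algebra_simps)
  finally show ?thesis .
qed

lemma summable_prob_bad_event:
  assumes "1/2 < \<beta>"
  shows "summable (\<lambda>n. prob (bad_event n (log_rate \<beta> n) (block_count n) (N n)))"
proof (rule summable_comparison_test_ev)
  define C where "C = real (6 * (2 * R + 1) + 2)"
  show "summable (\<lambda>n. 9 * C * inverse (real n ^ 2))"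
    by (intro summable_mult inverse_power_summable) auto
  show "eventually (\<lambda>n. norm (prob (bad_event n (log_rate \<beta> n) (block_count n) (N n)))
      \<le> 9 * C * inverse (real n ^ 2)) sequentially"
  proof (rule eventually_mono[OF eventually_ln_powr_ge[of "2 * \<beta>"]])
    show "1 < 2 * \<beta>"
      using assms by simp
    fix n assume n: "1 \<le> ln (real n) \<and> 6 * ln (real n) \<le> ln (real n) powr (2 * \<beta>)"
    have "0 \<le> \<beta>"
      using assms by simp
    note rate = log_rate_block_count_bounds[OF conjunct1[OF n] this]
    have "exp (- real n * (log_rate \<beta> n)\<^sup>2 / 2) \<le> exp (- (3 * ln (real n)))"
      using rate(6) n assms by simp
    also have "\<dots> = inverse (real n ^ 3)"
      using rate(1) exp_of_nat_mult[of 3 "ln (real n)"] by (simp add: exp_minus)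
    finally have tail: "exp (- real n * (log_rate \<beta> n)\<^sup>2 / 2) \<le> inverse (real n ^ 3)" .
    have "prob (bad_event n (log_rate \<beta> n) (block_count n) (N n))
        \<le> C * real (block_count n) * exp (- real n * (log_rate \<beta> n)\<^sup>2 / 2)"
      unfolding C_def using rate n assms
      by (intro prob_bad_event_le) auto
    also have "\<dots> \<le> C * (9 * real n) * inverse (real n ^ 3)"
      using rate n assms tail by (intro mult_mono) (auto simp: C_def)
    also have "\<dots> = 9 * C * inverse (real n ^ 2)"
      using rate n assms by (simp add: power3_eq_cube power2_eq_square field_simps)
    finally show "norm (prob (bad_event n (log_rate \<beta> n) (block_count n) (N n)))
      \<le> 9 * C * inverse (real n ^ 2)"
      by simp
  qed
qed

lemma wavelet_est_deviation_rate:
  assumes "1/2 < \<beta>" and J_nonneg: "eventually (\<lambda>n. 0 \<le> J n) sequentially"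
  shows "AE \<omega> in M. \<exists>C. eventually (\<lambda>n. \<forall>y.
    \<bar>wavelet_est \<phi> \<psi> (J n) n (\<lambda>i. Y i \<omega>) y - expectation (\<lambda>\<omega>'. wavelet_est \<phi> \<psi> (J n) n (\<lambda>i. Y i \<omega>') y)\<bar>
    \<le> C * (ln (real n) powr \<beta> * 2 powr real_of_int (J n) / sqrt (real n))) sequentially"
proof -
  define C where "C = real (2 * R + 1) * (B\<^sub>\<phi>\<^sup>2 + 4 * B\<^sub>\<psi>\<^sup>2)"
  define bad where "bad n = bad_event n (log_rate \<beta> n) (block_count n) (nat (J n))" for n
  have large: "eventually (\<lambda>n::nat. 1 \<le> ln (real n)) sequentially"
    using eventually_ln_powr_ge[of "2 * \<beta>"] assms by (auto elim: eventually_mono)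
  have "AE \<omega> in M. eventually (\<lambda>n. \<omega> \<in> space M - bad n) sequentially"
    unfolding bad_def using summable_prob_bad_event[OF assms(1)]
    by (intro borel_cantelli_AE1) (auto simp: less_top[symmetric])
  then show ?thesis
  proof (rule eventually_mono)
    fix \<omega> assume "eventually (\<lambda>n. \<omega> \<in> space M - bad n) sequentially"
    with large J_nonneg have "eventually (\<lambda>n. \<forall>y.
      \<bar>wavelet_est \<phi> \<psi> (J n) n (\<lambda>i. Y i \<omega>) y - expectation (\<lambda>\<omega>'. wavelet_est \<phi> \<psi> (J n) n (\<lambda>i. Y i \<omega>') y)\<bar>
      \<le> C * (ln (real n) powr \<beta> * 2 powr real_of_int (J n) / sqrt (real n))) sequentially"
    proof eventually_elim
      case (elim n)
      have "2 powr real_of_int (J n) = 2 ^ nat (J n)"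
        using elim(2) by (simp add: powr_realpow[symmetric])
      then show ?case
        using abs_wavelet_est_minus_expectation_le[of n "log_rate \<beta> n" "block_count n" \<omega> "nat (J n)"]
          log_rate_block_count_bounds[OF elim(1), of \<beta>] elim assms
        by (simp add: C_def bad_def log_rate_def mult.assoc)
    qed
    then show "\<exists>C. eventually (\<lambda>n. \<forall>y.
      \<bar>wavelet_est \<phi> \<psi> (J n) n (\<lambda>i. Y i \<omega>) y - expectation (\<lambda>\<omega>'. wavelet_est \<phi> \<psi> (J n) n (\<lambda>i. Y i \<omega>') y)\<bar>
      \<le> C * (ln (real n) powr \<beta> * 2 powr real_of_int (J n) / sqrt (real n))) sequentially"
      by blast
  qed
qed

end

lemma distr_borel_eq_density_if_distributed:
  assumes "distributed M lborel X f"
  shows "distr M borel X = density lborel f"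
proof -
  have "distr M borel X = distr M lborel X"
    by (rule distr_cong) auto
  also have "\<dots> = density lborel f"
    using assms by (rule distributed_distr_eq_density)
  finally show ?thesis .
qed

lemma measure_density_lborel_singleton:
  assumes "f \<in> borel_measurable lborel"
  shows "measure (density lborel f) {x} = 0"
  using assms by (simp add: measure_def emeasure_density nn_integral_null_set)

lemma L2_orthonormal_basis_wfam_measurable:
  assumes "L2_orthonormal_basis (wfam \<phi> \<psi>)"
  shows "\<phi> \<in> borel_measurable borel" "\<psi> \<in> borel_measurable borel"
proof -
  have "wfam \<phi> \<psi> (None, 0) = \<phi>" "wfam \<phi> \<psi> (Some 0, 0) = \<psi>"
    by (simp_all add: fun_eq_iff wfam_def wphi_def wpsi_def)
  moreover have "wfam \<phi> \<psi> a \<in> borel_measurable borel" for a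
    using assms unfolding L2_orthonormal_basis_def by blast
  ultimately show "\<phi> \<in> borel_measurable borel" "\<psi> \<in> borel_measurable borel"
    by metis+
qed

lemma bounded_compact_support_obtains:
  fixes h :: "real \<Rightarrow> real"
  assumes "bounded (range h)" "\<exists>R. \<forall>x. R < \<bar>x\<bar> \<longrightarrow> h x = 0"
  obtains B and R :: nat where "0 < B" "\<And>x. \<bar>h x\<bar> \<le> B" "\<And>x. h x \<noteq> 0 \<Longrightarrow> \<bar>x\<bar> \<le> real R"
proof -
  obtain B where "0 < B" "\<And>x. \<bar>h x\<bar> \<le> B"
    using assms(1) unfolding bounded_pos by auto
  moreover obtain R where "\<And>x. R < \<bar>x\<bar> \<Longrightarrow> h x = 0"
    using assms(2) by blast
  then have "\<bar>x\<bar> \<le> real (nat \<lceil>R\<rceil>)" if "h x \<noteq> 0" for x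
    using that real_nat_ceiling_ge[of R] by (meson not_le order_trans)
  ultimately show ?thesis
    using that by blast
qed

theorem proposition1:
  fixes M :: "'a measure" and Y :: "nat \<Rightarrow> 'a \<Rightarrow> real" and f :: "real \<Rightarrow> real"
    and \<phi> \<psi> \<Phi> :: "real \<Rightarrow> real" and j :: "nat \<Rightarrow> int"
  assumes prob: "prob_space M"
    and indep: "prob_space.indep_vars M (\<lambda>_. borel) Y UNIV"
    and dens: "\<And>i. distributed M lborel (Y i) (\<lambda>x. ennreal (f x))"
    and f_nonneg: "\<And>x. 0 \<le> f x"
    and f_L2: "integrable lborel (\<lambda>x. (f x)\<^sup>2)"
    and basis: "L2_orthonormal_basis (wfam \<phi> \<psi>)"
    and j_mono: "mono j"
    and j_lim: "filterlim j at_top sequentially"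
    \<comment> \<open>(A4)\<close>
    and A4_phi_bdd: "bounded (range \<phi>)"
    and A4_phi_supp: "\<exists>R. \<forall>x. R < \<bar>x\<bar> \<longrightarrow> \<phi> x = 0"
    and A4_psi_bdd: "bounded (range \<psi>)"
    and A4_psi_supp: "\<exists>R. \<forall>x. R < \<bar>x\<bar> \<longrightarrow> \<psi> x = 0"
    \<comment> \<open>(A5)\<close>
    and A5_dom: "\<And>x y. \<bar>wkernel \<phi> x y\<bar> \<le> \<Phi> (x - y)"
    and A5_nonneg: "\<And>u. 0 \<le> \<Phi> u"
    and A5_bdd: "bounded (range \<Phi>)"
    and A5_supp: "\<exists>R. \<forall>u. R < \<bar>u\<bar> \<longrightarrow> \<Phi> u = 0"
    and A5_sym: "\<And>u. \<Phi> (- u) = \<Phi> u"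
    and A5_sq: "integrable lborel (\<lambda>u. u\<^sup>2 * (\<Phi> u)\<^sup>2)"
    and A5_mom: "\<And>k::nat. k \<in> {0, 1, 4} \<Longrightarrow> integrable lborel (\<lambda>u. \<bar>u\<bar> ^ k * \<Phi> u)"
    and A5_int: "\<And>x (k::nat). k \<in> {1, 2, 3} \<Longrightarrow>
                   integrable lborel (\<lambda>y. wkernel \<phi> x y * (y - x) ^ k)"
    and A5_van: "\<And>x (k::nat). k \<in> {1, 2, 3} \<Longrightarrow>
                   (LINT y|lborel. wkernel \<phi> x y * (y - x) ^ k) = 0"
  shows "\<forall>\<beta>::real. \<beta> > 1/2 \<longrightarrow>
           (AE \<omega> in M. \<exists>C::real. \<forall>\<^sub>F n in sequentially. \<forall>y::real.
              \<bar>wavelet_est \<phi> \<psi> (j n) n (\<lambda>i. Y i \<omega>) y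
                 - prob_space.expectation M (\<lambda>\<omega>'. wavelet_est \<phi> \<psi> (j n) n (\<lambda>i. Y i \<omega>') y)\<bar>
              \<le> C * (ln (real n) powr \<beta> * 2 powr (real_of_int (j n)) / sqrt (real n)))"
proof (intro allI impI)
  fix \<beta> :: real assume "1/2 < \<beta>"
  obtain B\<^sub>\<phi> R\<^sub>\<phi> B\<^sub>\<psi> R\<^sub>\<psi> where \<phi>: "0 < B\<^sub>\<phi>" "\<And>x. \<bar>\<phi> x\<bar> \<le> B\<^sub>\<phi>" "\<And>x. \<phi> x \<noteq> 0 \<Longrightarrow> \<bar>x\<bar> \<le> real R\<^sub>\<phi>"
    and \<psi>: "0 < B\<^sub>\<psi>" "\<And>x. \<bar>\<psi> x\<bar> \<le> B\<^sub>\<psi>" "\<And>x. \<psi> x \<noteq> 0 \<Longrightarrow> \<bar>x\<bar> \<le> real R\<^sub>\<psi>"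
    using bounded_compact_support_obtains[OF A4_phi_bdd A4_phi_supp]
      bounded_compact_support_obtains[OF A4_psi_bdd A4_psi_supp] by metis
  interpret compact_wavelet_sample M Y "density lborel f" \<phi> \<psi> "max R\<^sub>\<phi> R\<^sub>\<psi>" B\<^sub>\<phi> B\<^sub>\<psi>
  proof (intro compact_wavelet_sample.intro iid_sample.intro iid_sample_axioms.intro
      compact_wavelet_sample_axioms.intro)
    show "\<phi> x \<noteq> 0 \<Longrightarrow> \<bar>x\<bar> \<le> real (max R\<^sub>\<phi> R\<^sub>\<psi>)" "\<psi> x \<noteq> 0 \<Longrightarrow> \<bar>x\<bar> \<le> real (max R\<^sub>\<phi> R\<^sub>\<psi>)" for x
      using \<phi>(3)[of x] \<psi>(3)[of x] by linarith+
  qed (fact prob indep distr_borel_eq_density_if_distributed[OF dens] \<phi>(1,2) \<psi>(1,2)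
      L2_orthonormal_basis_wfam_measurable[OF basis]
      measure_density_lborel_singleton[OF distributed_borel_measurable[OF dens]])+
  have "eventually (\<lambda>n. 0 \<le> j n) sequentially"
    using j_lim by (simp add: filterlim_at_top)
  then show "AE \<omega> in M. \<exists>C::real. \<forall>\<^sub>F n in sequentially. \<forall>y::real.
      \<bar>wavelet_est \<phi> \<psi> (j n) n (\<lambda>i. Y i \<omega>) y
         - prob_space.expectation M (\<lambda>\<omega>'. wavelet_est \<phi> \<psi> (j n) n (\<lambda>i. Y i \<omega>') y)\<bar>
      \<le> C * (ln (real n) powr \<beta> * 2 powr (real_of_int (j n)) / sqrt (real n))"
    by (rule wavelet_est_deviation_rate[OF \<open>1/2 < \<beta>\<close>])
qed

end
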